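(* Let $Q$ be a quiver and $\theta\in\mathbb{Z}^{Q_0}$ with $\nabla(Q,\theta)\ne\emptyset$. Suppose $S\subset Q_0$ is such that there is at most one arrow $a$ with $a^+\in S$, $a^-\notin S$ and at most one arrow $b$ with $b^+\notin S$, $b^-\in S$. Then $a$ (if it exists) is contractable when $\theta(S)\ge0$, and $b$ (if it exists) is contractable when $\theta(S)\le0$, where $\theta(S)=\sum_{v\in S}\theta(v)$.
   Context: A quiver $Q$: vertices $Q_0$, arrows $Q_1$, $a$ from $a^-$ to $a^+$. $\nabla(Q,\theta)=\{x\in\mathbb{R}_{\ge0}^{Q_1}\mid\forall v:\ \theta(v)=\sum_{a^+=v}x(a)-\sum_{a^-=v}x(a)\}$. Contracting a non-loop arrow $a$ gives $(\hat Q,\hat\theta)$: delete $a$, glue $a^-$ and $a^+$ to a vertex $v$, $\hat\theta(v)=\theta(a^-)+\theta(a^+)$, $\hat\theta=\theta$ elsewhere. The arrow is contractable if $\nabla(Q,\theta)$ and $\nabla(\hat Q,\hat\theta)$ are integral-affinely equivalent, i.e. there is an affine isomorphism between their affine spans mapping the lattice points ($\mathbb{Z}^{Q_1}$, resp. $\mathbb{Z}^{\hat Q_1}$) of one span onto those of the other and one polyhedron onto the other. *)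

theory Defs
  imports Complex_Main
begin

text \<open>A quiver is given by a vertex set Q0, an arrow set Q1 and maps tlv, hdv
  (tlv a = a^-, hdv a = a^+). Points of R^{Q1} are functions arrows => real vanishing
  outside Q1.\<close>

definition flow_polytope ::
  "'v set \<Rightarrow> 'a set \<Rightarrow> ('a \<Rightarrow> 'v) \<Rightarrow> ('a \<Rightarrow> 'v) \<Rightarrow> ('v \<Rightarrow> int) \<Rightarrow> ('a \<Rightarrow> real) set" where
  "flow_polytope Q0 Q1 tlv hdv \<theta> =
     {x. (\<forall>i. i \<notin> Q1 \<longrightarrow> x i = 0) \<and> (\<forall>i\<in>Q1. 0 \<le> x i) \<and>
         (\<forall>v\<in>Q0. real_of_int (\<theta> v) =
             (\<Sum>a\<in>{a\<in>Q1. hdv a = v}. x a) - (\<Sum>a\<in>{a\<in>Q1. tlv a = v}. x a))}"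

definition aff_span :: "('a \<Rightarrow> real) set \<Rightarrow> ('a \<Rightarrow> real) set" where
  "aff_span P = {x. \<exists>T u. finite T \<and> T \<subseteq> P \<and> sum u T = 1 \<and>
                        x = (\<lambda>i. \<Sum>y\<in>T. u y * y i)}"

definition lattice_pts :: "('a \<Rightarrow> real) set" where
  "lattice_pts = {x. \<forall>i. x i \<in> \<int>}"

definition int_aff_equiv :: "('a \<Rightarrow> real) set \<Rightarrow> ('b \<Rightarrow> real) set \<Rightarrow> bool" where
  "int_aff_equiv P R \<longleftrightarrow> (\<exists>f :: ('a \<Rightarrow> real) \<Rightarrow> ('b \<Rightarrow> real).
      (\<forall>x\<in>aff_span P. \<forall>y\<in>aff_span P. \<forall>t::real.
          f (\<lambda>i. (1 - t) * x i + t * y i) = (\<lambda>j. (1 - t) * f x j + t * f y j)) \<and>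
      bij_betw f (aff_span P) (aff_span R) \<and>
      f ` (aff_span P \<inter> lattice_pts) = aff_span R \<inter> lattice_pts \<and>
      f ` P = R)"

text \<open>Contraction of arrow a: delete a, glue a^+ onto a^- (the glued vertex is
  represented by a^-).\<close>
definition glue :: "('a \<Rightarrow> 'v) \<Rightarrow> ('a \<Rightarrow> 'v) \<Rightarrow> 'a \<Rightarrow> 'v \<Rightarrow> 'v" where
  "glue tlv hdv a w = (if w = hdv a then tlv a else w)"

definition contr_theta :: "('a \<Rightarrow> 'v) \<Rightarrow> ('a \<Rightarrow> 'v) \<Rightarrow> ('v \<Rightarrow> int) \<Rightarrow> 'a \<Rightarrow> 'v \<Rightarrow> int" where
  "contr_theta tlv hdv \<theta> a w = (if w = tlv a then \<theta> (tlv a) + \<theta> (hdv a) else \<theta> w)"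

definition contractable ::
  "'v set \<Rightarrow> 'a set \<Rightarrow> ('a \<Rightarrow> 'v) \<Rightarrow> ('a \<Rightarrow> 'v) \<Rightarrow> ('v \<Rightarrow> int) \<Rightarrow> 'a \<Rightarrow> bool" where
  "contractable Q0 Q1 tlv hdv \<theta> a \<longleftrightarrow> a \<in> Q1 \<and> tlv a \<noteq> hdv a \<and>
     int_aff_equiv (flow_polytope Q0 Q1 tlv hdv \<theta>)
       (flow_polytope (glue tlv hdv a ` Q0) (Q1 - {a}) (glue tlv hdv a \<circ> tlv) (glue tlv hdv a \<circ> hdv)
          (contr_theta tlv hdv \<theta> a))"

end

theory Submission
  imports Defs
begin

text \<open>Summing the flow equations over S gives the cut equation
  \<open>\<theta>(S) = x(a) - (\<Sum>b\<in>B. x(b))\<close>, where a is the only arrow entering S and B is the set of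
  arrows leaving S. So on \<open>\<nabla>(Q,\<theta>)\<close> the coordinate \<open>x(a)\<close> is an integral affine function
  of the others, and forgetting it is an integral-affine isomorphism onto its image. That
  image is the flow polytope of the contracted quiver: a contracted flow lifts back by
  setting \<open>x(a)\<close> from the cut equation, which is nonnegative as \<open>\<theta>(S) \<ge> 0\<close> and restores the
  flow equation at \<open>a\<^sup>+\<close>. The arrow leaving S is handled by passing to the complement of S,
  since \<open>\<theta>(Q\<^sub>0) = 0\<close> as soon as \<open>\<nabla>(Q,\<theta>)\<close> is nonempty.\<close>

definition net_flow :: "'a set \<Rightarrow> ('a \<Rightarrow> 'v) \<Rightarrow> ('a \<Rightarrow> 'v) \<Rightarrow> ('a \<Rightarrow> real) \<Rightarrow> 'v \<Rightarrow> real" where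
  "net_flow Q1 tlv hdv x v = (\<Sum>c\<in>Q1. x c * (of_bool (hdv c = v) - of_bool (tlv c = v)))"

lemma net_flow_conv_in_out:
  assumes "finite Q1"
  shows "(\<Sum>a\<in>{a\<in>Q1. hdv a = v}. x a) - (\<Sum>a\<in>{a\<in>Q1. tlv a = v}. x a) = net_flow Q1 tlv hdv x v"
  unfolding net_flow_def using assms
  by (simp add: sum.inter_filter sum_subtractf[symmetric] right_diff_distrib) (auto intro: sum.cong)

lemma mem_flow_polytope_iff:
  assumes "finite Q1"
  shows "x \<in> flow_polytope Q0 Q1 tlv hdv \<theta> \<longleftrightarrow>
    (\<forall>i. i \<notin> Q1 \<longrightarrow> x i = 0) \<and> (\<forall>i\<in>Q1. 0 \<le> x i) \<and> (\<forall>v\<in>Q0. of_int (\<theta> v) = net_flow Q1 tlv hdv x v)"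
  unfolding flow_polytope_def by (simp add: net_flow_conv_in_out[OF assms])

lemma sum_net_flow:
  assumes "finite S"
  shows "(\<Sum>v\<in>S. net_flow Q1 tlv hdv x v) = (\<Sum>c\<in>Q1. x c * (of_bool (hdv c \<in> S) - of_bool (tlv c \<in> S)))"
proof -
  have "(\<Sum>v\<in>S. net_flow Q1 tlv hdv x v) = (\<Sum>c\<in>Q1. x c * (\<Sum>v\<in>S. of_bool (hdv c = v) - of_bool (tlv c = v)))"
    unfolding net_flow_def by (subst sum.swap) (simp add: sum_distrib_left)
  also have "\<dots> = (\<Sum>c\<in>Q1. x c * (of_bool (hdv c \<in> S) - of_bool (tlv c \<in> S)))"
    using assms by (simp add: sum_subtractf of_bool_def sum.delta)
  finally show ?thesis .
qed

lemma sum_net_flow_cut: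
  assumes "finite S" "finite Q1" "a \<in> Q1" "hdv a \<in> S" "tlv a \<notin> S"
    and entering: "\<forall>c\<in>Q1. hdv c \<in> S \<and> tlv c \<notin> S \<longrightarrow> c = a"
  shows "(\<Sum>v\<in>S. net_flow Q1 tlv hdv x v) = x a - (\<Sum>b\<in>{b\<in>Q1. hdv b \<notin> S \<and> tlv b \<in> S}. x b)"
proof -
  have "(\<Sum>v\<in>S. net_flow Q1 tlv hdv x v) =
      (\<Sum>c\<in>Q1. (if c = a then x c else 0) - (if hdv c \<notin> S \<and> tlv c \<in> S then x c else 0))"
    unfolding sum_net_flow[OF assms(1)]
  proof (rule sum.cong[OF refl])
    fix c assume "c \<in> Q1"
    then have "hdv c \<in> S \<and> tlv c \<notin> S \<longleftrightarrow> c = a"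
      using entering assms(4,5) by blast
    then show "x c * (of_bool (hdv c \<in> S) - of_bool (tlv c \<in> S)) =
        (if c = a then x c else 0) - (if hdv c \<notin> S \<and> tlv c \<in> S then x c else 0)"
      by (cases "hdv c \<in> S"; cases "tlv c \<in> S") simp_all
  qed
  also have "\<dots> = x a - (\<Sum>b\<in>{b\<in>Q1. hdv b \<notin> S \<and> tlv b \<in> S}. x b)"
    using assms(2,3) by (simp add: sum_subtractf sum.inter_filter)
  finally show ?thesis .
qed

lemma net_flow_cong: "(\<And>c. c \<in> Q1 \<Longrightarrow> x c = y c) \<Longrightarrow> net_flow Q1 tlv hdv x v = net_flow Q1 tlv hdv y v"
  unfolding net_flow_def by (auto intro!: sum.cong)

lemma net_flow_remove:
  assumes "finite Q1" "a \<in> Q1"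
  shows "net_flow Q1 tlv hdv x v =
    x a * (of_bool (hdv a = v) - of_bool (tlv a = v)) + net_flow (Q1 - {a}) tlv hdv x v"
  unfolding net_flow_def using assms by (simp add: sum.remove)

lemma net_flow_contract_other:
  assumes "finite Q1" "a \<in> Q1" "w \<noteq> tlv a" "w \<noteq> hdv a"
  shows "net_flow (Q1 - {a}) (glue tlv hdv a \<circ> tlv) (glue tlv hdv a \<circ> hdv) x w = net_flow Q1 tlv hdv x w"
proof -
  have "net_flow (Q1 - {a}) (glue tlv hdv a \<circ> tlv) (glue tlv hdv a \<circ> hdv) x w = net_flow (Q1 - {a}) tlv hdv x w"
    unfolding net_flow_def using assms(3,4) by (intro sum.cong refl) (auto simp: glue_def)
  then show ?thesis using net_flow_remove[OF assms(1,2), of tlv hdv x w] assms(3,4) by simp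
qed

lemma net_flow_contract_glued:
  assumes "finite Q1" "a \<in> Q1" "tlv a \<noteq> hdv a"
  shows "net_flow (Q1 - {a}) (glue tlv hdv a \<circ> tlv) (glue tlv hdv a \<circ> hdv) x (tlv a) =
    net_flow Q1 tlv hdv x (tlv a) + net_flow Q1 tlv hdv x (hdv a)"
proof -
  have "net_flow (Q1 - {a}) (glue tlv hdv a \<circ> tlv) (glue tlv hdv a \<circ> hdv) x (tlv a) =
      net_flow (Q1 - {a}) tlv hdv x (tlv a) + net_flow (Q1 - {a}) tlv hdv x (hdv a)"
    unfolding net_flow_def sum.distrib[symmetric] using assms(3)
    by (intro sum.cong refl) (auto simp: glue_def algebra_simps)
  then show ?thesis
    using net_flow_remove[OF assms(1,2), of tlv hdv x "tlv a"] net_flow_remove[OF assms(1,2), of tlv hdv x "hdv a"] assms(3)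
    by simp
qed

lemma glue_image:
  assumes "tlv a \<in> Q0" "tlv a \<noteq> hdv a"
  shows "glue tlv hdv a ` Q0 = Q0 - {hdv a}"
  using assms by (auto simp: glue_def image_iff)

lemma sum_eq_0_if_flow_polytope_nonempty:
  assumes "finite Q0" "finite Q1" "\<forall>c\<in>Q1. tlv c \<in> Q0 \<and> hdv c \<in> Q0"
    and "flow_polytope Q0 Q1 tlv hdv \<theta> \<noteq> {}"
  shows "sum \<theta> Q0 = 0"
proof -
  obtain x where "x \<in> flow_polytope Q0 Q1 tlv hdv \<theta>" using assms(4) by blast
  then have "of_int (sum \<theta> Q0) = (\<Sum>v\<in>Q0. net_flow Q1 tlv hdv x v)"
    unfolding mem_flow_polytope_iff[OF assms(2)] by simp
  also have "\<dots> = 0"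
    unfolding sum_net_flow[OF assms(1)] using assms(3) by (auto intro!: sum.neutral)
  finally show ?thesis by (simp flip: of_int_sum)
qed

lemma aff_span_affine_relation:
  assumes "finite B" and "\<forall>y\<in>P. y a = c + (\<Sum>b\<in>B. y b)" and "x \<in> aff_span P"
  shows "x a = c + (\<Sum>b\<in>B. x b)"
proof -
  from assms(3) obtain T u where T: "finite T" "T \<subseteq> P" "sum u T = 1"
    and x: "x = (\<lambda>i. \<Sum>y\<in>T. u y * y i)"
    unfolding aff_span_def by blast
  have "x a = (\<Sum>y\<in>T. u y * (c + (\<Sum>b\<in>B. y b)))"
    using assms(2) T(2) x by (auto intro!: sum.cong)
  also have "\<dots> = c * sum u T + (\<Sum>y\<in>T. \<Sum>b\<in>B. u y * y b)"
    by (simp add: distrib_left sum.distrib sum_distrib_left sum_distrib_right mult.commute)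
  also have "\<dots> = c + (\<Sum>b\<in>B. x b)"
    using T(3) x by (simp add: sum.swap[of _ T])
  finally show ?thesis .
qed

lemma aff_span_image_subset:
  assumes "inj_on h P"
    and "\<And>T u. finite T \<Longrightarrow> T \<subseteq> P \<Longrightarrow> sum u T = 1 \<Longrightarrow>
           h (\<lambda>i. \<Sum>y\<in>T. u y * y i) = (\<lambda>i. \<Sum>y\<in>T. u y * h y i)"
  shows "h ` aff_span P \<subseteq> aff_span (h ` P)"
proof
  fix z assume "z \<in> h ` aff_span P"
  then obtain T u where T: "finite T" "T \<subseteq> P" "sum u T = 1"
    and z: "z = h (\<lambda>i. \<Sum>y\<in>T. u y * y i)"
    unfolding aff_span_def by blast
  have inj: "inj_on h T" using assms(1) T(2) by (rule inj_on_subset)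
  define u' where "u' = u \<circ> inv_into T h"
  have "sum u' (h ` T) = 1"
    using T(3) by (simp add: sum.reindex[OF inj] u'_def inv_into_f_f[OF inj])
  moreover have "z = (\<lambda>i. \<Sum>y\<in>h ` T. u' y * y i)"
    using assms(2)[OF T] z by (simp add: sum.reindex[OF inj] u'_def inv_into_f_f[OF inj])
  ultimately show "z \<in> aff_span (h ` P)"
    unfolding aff_span_def using T by blast
qed

text \<open>The inverse of forgetting the coordinate a is \<open>y \<mapsto> y(a := c + \<Sum>b\<in>B. y b)\<close>; it maps
  lattice points to lattice points because c is an integer.\<close>

lemma int_aff_equiv_forget_coordinate:
  assumes "finite B" "a \<notin> B" "c \<in> \<int>" and P: "\<forall>x\<in>P. x a = c + (\<Sum>b\<in>B. x b)"
  shows "int_aff_equiv P ((\<lambda>x. x(a := 0)) ` P)"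
proof -
  define f where "f = (\<lambda>x::'a \<Rightarrow> real. x(a := 0))"
  define g where "g = (\<lambda>y::'a \<Rightarrow> real. y(a := c + (\<Sum>b\<in>B. y b)))"
  define R where "R = f ` P"
  have gf: "g (f x) = x" if "x a = c + (\<Sum>b\<in>B. x b)" for x
  proof -
    have "(\<Sum>b\<in>B. f x b) = (\<Sum>b\<in>B. x b)"
      using assms(2) unfolding f_def by (auto intro!: sum.cong)
    then show ?thesis using that unfolding g_def f_def by auto
  qed
  have fg: "f (g y) = y" if "y a = 0" for y
    using that unfolding f_def g_def by auto
  have R0: "\<forall>y\<in>R. y a = 0" unfolding R_def f_def by auto
  have affP: "x a = c + (\<Sum>b\<in>B. x b)" if "x \<in> aff_span P" for x
    using aff_span_affine_relation[OF assms(1) P that] .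
  have affR: "y a = 0" if "y \<in> aff_span R" for y
    using aff_span_affine_relation[of "{}" R a 0 y] R0 that by simp
  have gR: "g ` R = P"
    unfolding R_def image_image using gf P by simp
  have f_aff: "f ` aff_span P \<subseteq> aff_span R"
    unfolding R_def
  proof (rule aff_span_image_subset)
    show "inj_on f P" by (metis P gf inj_onI)
  qed (auto simp: f_def)
  have g_aff: "g ` aff_span R \<subseteq> aff_span P"
    unfolding gR[symmetric]
  proof (rule aff_span_image_subset)
    show "inj_on g R" by (metis R0 fg inj_onI)
  next
    fix T and u :: "('a \<Rightarrow> real) \<Rightarrow> real" assume "sum u T = 1"
    then have "c + (\<Sum>b\<in>B. \<Sum>y\<in>T. u y * y b) = (\<Sum>y\<in>T. u y * (c + (\<Sum>b\<in>B. y b)))"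
      by (simp add: distrib_left sum.distrib sum_distrib_left sum_distrib_right[symmetric] sum.swap[of _ B])
    then show "g (\<lambda>i. \<Sum>y\<in>T. u y * y i) = (\<lambda>i. \<Sum>y\<in>T. u y * g y i)"
      by (auto simp: g_def)
  qed
  have f_aff_eq: "f ` aff_span P = aff_span R"
    using f_aff g_aff fg affR by (metis image_eqI subsetI subset_antisym image_subset_iff)
  have f_lat: "f ` (aff_span P \<inter> lattice_pts) = aff_span R \<inter> lattice_pts"
  proof
    show "f ` (aff_span P \<inter> lattice_pts) \<subseteq> aff_span R \<inter> lattice_pts"
      using f_aff by (auto simp: lattice_pts_def f_def)
    show "aff_span R \<inter> lattice_pts \<subseteq> f ` (aff_span P \<inter> lattice_pts)"
    proof
      fix y assume y: "y \<in> aff_span R \<inter> lattice_pts"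
      then have "g y \<in> aff_span P \<inter> lattice_pts"
        using g_aff assms(3) by (auto simp: lattice_pts_def g_def intro!: Ints_add)
      then show "y \<in> f ` (aff_span P \<inter> lattice_pts)"
        using fg affR y by (metis IntD1 image_eqI)
    qed
  qed
  have f_affine: "\<forall>x\<in>aff_span P. \<forall>y\<in>aff_span P. \<forall>t.
      f (\<lambda>i. (1 - t) * x i + t * y i) = (\<lambda>j. (1 - t) * f x j + t * f y j)"
    by (auto simp: f_def)
  have "bij_betw f (aff_span P) (aff_span R)"
    unfolding bij_betw_def using f_aff_eq affP gf by (metis inj_onI)
  then show ?thesis
    unfolding int_aff_equiv_def R_def[symmetric] f_def[symmetric]
    using f_affine f_lat R_def by blast
qed

lemma flow_polytope_contract:
  assumes "finite Q1" "a \<in> Q1" "tlv a \<in> Q0" "hdv a \<in> Q0" "tlv a \<noteq> hdv a"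
    and x: "x \<in> flow_polytope Q0 Q1 tlv hdv \<theta>"
  shows "x(a := 0) \<in> flow_polytope (glue tlv hdv a ` Q0) (Q1 - {a})
           (glue tlv hdv a \<circ> tlv) (glue tlv hdv a \<circ> hdv) (contr_theta tlv hdv \<theta> a)"
proof -
  have x_flow: "\<forall>v\<in>Q0. of_int (\<theta> v) = net_flow Q1 tlv hdv x v"
    using x unfolding mem_flow_polytope_iff[OF assms(1)] by blast
  have drop_a: "net_flow (Q1 - {a}) t h (x(a := 0)) w = net_flow (Q1 - {a}) t h x w" for t h w
    by (rule net_flow_cong) auto
  have "of_int (contr_theta tlv hdv \<theta> a w) =
      net_flow (Q1 - {a}) (glue tlv hdv a \<circ> tlv) (glue tlv hdv a \<circ> hdv) (x(a := 0)) w"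
    if "w \<in> Q0 - {hdv a}" for w
  proof (cases "w = tlv a")
    case True
    then show ?thesis
      using net_flow_contract_glued[where tlv=tlv and hdv=hdv and x=x, OF assms(1,2,5)] x_flow assms(3,4)
      by (simp add: contr_theta_def drop_a)
  next
    case False
    then show ?thesis
      using net_flow_contract_other[where tlv=tlv and hdv=hdv and x=x, OF assms(1,2) False] x_flow that
      by (simp add: contr_theta_def drop_a)
  qed
  then show ?thesis
    using x unfolding mem_flow_polytope_iff[OF assms(1)] mem_flow_polytope_iff[OF finite_Diff[OF assms(1)]]
    by (simp add: glue_image[where tlv=tlv and hdv=hdv, OF assms(3,5)])
qed

lemma contracted_flow_equation:
  assumes "finite Q1" "tlv a \<in> Q0" "tlv a \<noteq> hdv a"
    and "y \<in> flow_polytope (glue tlv hdv a ` Q0) (Q1 - {a})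
              (glue tlv hdv a \<circ> tlv) (glue tlv hdv a \<circ> hdv) (contr_theta tlv hdv \<theta> a)"
    and "w \<in> Q0" "w \<noteq> hdv a"
  shows "of_int (contr_theta tlv hdv \<theta> a w) =
    net_flow (Q1 - {a}) (glue tlv hdv a \<circ> tlv) (glue tlv hdv a \<circ> hdv) (y(a := t)) w"
proof -
  have "net_flow (Q1 - {a}) t' h' (y(a := t)) w = net_flow (Q1 - {a}) t' h' y w" for t' h'
    by (rule net_flow_cong) auto
  then show ?thesis
    using assms(4-6) unfolding mem_flow_polytope_iff[OF finite_Diff[OF assms(1)]]
    by (simp add: glue_image[where tlv=tlv and hdv=hdv, OF assms(2,3)])
qed

lemma lift_flow_equation_other:
  assumes "finite Q1" "a \<in> Q1" "tlv a \<in> Q0" "tlv a \<noteq> hdv a"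
    and "y \<in> flow_polytope (glue tlv hdv a ` Q0) (Q1 - {a})
              (glue tlv hdv a \<circ> tlv) (glue tlv hdv a \<circ> hdv) (contr_theta tlv hdv \<theta> a)"
    and "v \<in> Q0" "v \<noteq> tlv a" "v \<noteq> hdv a"
  shows "of_int (\<theta> v) = net_flow Q1 tlv hdv (y(a := t)) v"
proof -
  have "of_int (\<theta> v) = of_int (contr_theta tlv hdv \<theta> a v)"
    using assms(7) by (simp add: contr_theta_def)
  also have "\<dots> = net_flow (Q1 - {a}) (glue tlv hdv a \<circ> tlv) (glue tlv hdv a \<circ> hdv) (y(a := t)) v"
    using assms(1,3,4,5,6,8) by (rule contracted_flow_equation)
  also have "\<dots> = net_flow Q1 tlv hdv (y(a := t)) v"
    using assms(1,2,7,8) by (rule net_flow_contract_other)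
  finally show ?thesis .
qed

text \<open>The flow equation at \<open>a\<^sup>-\<close> is recovered from the one at the glued vertex.\<close>

lemma flow_polytope_uncontract:
  assumes "finite Q1" "a \<in> Q1" "tlv a \<in> Q0" "tlv a \<noteq> hdv a"
    and y: "y \<in> flow_polytope (glue tlv hdv a ` Q0) (Q1 - {a})
              (glue tlv hdv a \<circ> tlv) (glue tlv hdv a \<circ> hdv) (contr_theta tlv hdv \<theta> a)"
    and "0 \<le> t" and hd_flow: "of_int (\<theta> (hdv a)) = net_flow Q1 tlv hdv (y(a := t)) (hdv a)"
  shows "y(a := t) \<in> flow_polytope Q0 Q1 tlv hdv \<theta>"
proof -
  have "of_int (\<theta> (tlv a)) + of_int (\<theta> (hdv a)) = of_int (contr_theta tlv hdv \<theta> a (tlv a))"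
    by (simp add: contr_theta_def)
  also have "\<dots> = net_flow (Q1 - {a}) (glue tlv hdv a \<circ> tlv) (glue tlv hdv a \<circ> hdv) (y(a := t)) (tlv a)"
    using assms(1,3,4) y assms(3,4) by (rule contracted_flow_equation)
  also have "\<dots> = net_flow Q1 tlv hdv (y(a := t)) (tlv a) + net_flow Q1 tlv hdv (y(a := t)) (hdv a)"
    using assms(1,2,4) by (rule net_flow_contract_glued)
  finally have tl_flow: "of_int (\<theta> (tlv a)) = net_flow Q1 tlv hdv (y(a := t)) (tlv a)"
    using hd_flow by simp
  show ?thesis
    unfolding mem_flow_polytope_iff[OF assms(1)]
  proof (intro conjI ballI allI impI)
    show "(y(a := t)) i = 0" if "i \<notin> Q1" for i
      using y that assms(2) unfolding mem_flow_polytope_iff[OF finite_Diff[OF assms(1)]] by auto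
    show "0 \<le> (y(a := t)) i" if "i \<in> Q1" for i
      using y that \<open>0 \<le> t\<close> unfolding mem_flow_polytope_iff[OF finite_Diff[OF assms(1)]] by auto
    show "of_int (\<theta> v) = net_flow Q1 tlv hdv (y(a := t)) v" if "v \<in> Q0" for v
      using lift_flow_equation_other[OF assms(1-4) y that] tl_flow hd_flow by blast
  qed
qed

text \<open>The equations at the vertices of S other than \<open>a\<^sup>+\<close> already hold, so the cut equation
  yields the one at \<open>a\<^sup>+\<close>.\<close>

lemma lift_flow_equation_head:
  assumes "finite S" "finite Q1" "S \<subseteq> Q0" "a \<in> Q1" "tlv a \<in> Q0" "hdv a \<in> S" "tlv a \<notin> S"
    and entering: "\<forall>c\<in>Q1. hdv c \<in> S \<and> tlv c \<notin> S \<longrightarrow> c = a"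
    and y: "y \<in> flow_polytope (glue tlv hdv a ` Q0) (Q1 - {a})
              (glue tlv hdv a \<circ> tlv) (glue tlv hdv a \<circ> hdv) (contr_theta tlv hdv \<theta> a)"
  defines "B \<equiv> {b\<in>Q1. hdv b \<notin> S \<and> tlv b \<in> S}"
  defines "t \<equiv> of_int (sum \<theta> S) + (\<Sum>b\<in>B. y b)"
  shows "of_int (\<theta> (hdv a)) = net_flow Q1 tlv hdv (y(a := t)) (hdv a)"
proof -
  have "tlv a \<noteq> hdv a" using assms(6,7) by auto
  have "(\<Sum>b\<in>B. (y(a := t)) b) = (\<Sum>b\<in>B. y b)"
    using assms(6) by (intro sum.cong) (auto simp: B_def)
  then have S_sum: "(\<Sum>v\<in>S. net_flow Q1 tlv hdv (y(a := t)) v) = of_int (sum \<theta> S)"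
    unfolding sum_net_flow_cut[OF assms(1,2,4,6,7) entering] B_def[symmetric] by (simp add: t_def)
  have S_other: "(\<Sum>v\<in>S - {hdv a}. net_flow Q1 tlv hdv (y(a := t)) v) = (\<Sum>v\<in>S - {hdv a}. of_int (\<theta> v))"
  proof (rule sum.cong[OF refl])
    fix v assume "v \<in> S - {hdv a}"
    then have "v \<in> Q0" "v \<noteq> tlv a" "v \<noteq> hdv a" using assms(3,7) by auto
    then show "net_flow Q1 tlv hdv (y(a := t)) v = of_int (\<theta> v)"
      using lift_flow_equation_other[OF assms(2,4,5) \<open>tlv a \<noteq> hdv a\<close> y] by simp
  qed
  have "(\<Sum>v\<in>S. net_flow Q1 tlv hdv (y(a := t)) v) =
      net_flow Q1 tlv hdv (y(a := t)) (hdv a) + (\<Sum>v\<in>S - {hdv a}. net_flow Q1 tlv hdv (y(a := t)) v)"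
    by (rule sum.remove[OF assms(1,6)])
  moreover have "(\<Sum>v\<in>S. of_int (\<theta> v) :: real) = of_int (\<theta> (hdv a)) + (\<Sum>v\<in>S - {hdv a}. of_int (\<theta> v))"
    by (rule sum.remove[OF assms(1,6)])
  ultimately show ?thesis
    using S_sum S_other by (simp add: of_int_sum)
qed

lemma contractable_entering_arrow:
  assumes "finite S" "finite Q1" and arrows: "\<forall>c\<in>Q1. tlv c \<in> Q0 \<and> hdv c \<in> Q0" and "S \<subseteq> Q0"
    and a: "a \<in> Q1" "hdv a \<in> S" "tlv a \<notin> S"
    and entering: "\<forall>c\<in>Q1. hdv c \<in> S \<and> tlv c \<notin> S \<longrightarrow> c = a"
    and "0 \<le> sum \<theta> S"
  shows "contractable Q0 Q1 tlv hdv \<theta> a"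
proof -
  define P where "P = flow_polytope Q0 Q1 tlv hdv \<theta>"
  define R where "R = flow_polytope (glue tlv hdv a ` Q0) (Q1 - {a})
    (glue tlv hdv a \<circ> tlv) (glue tlv hdv a \<circ> hdv) (contr_theta tlv hdv \<theta> a)"
  define B where "B = {b\<in>Q1. hdv b \<notin> S \<and> tlv b \<in> S}"
  have ends: "tlv a \<in> Q0" "hdv a \<in> Q0" "tlv a \<noteq> hdv a" using arrows a by auto
  have B: "a \<notin> B" "finite B" "B \<subseteq> Q1" using a assms(2) by (auto simp: B_def)
  have cut_P: "\<forall>x\<in>P. x a = of_int (sum \<theta> S) + (\<Sum>b\<in>B. x b)"
  proof
    fix x assume "x \<in> P"
    then have "(\<Sum>v\<in>S. net_flow Q1 tlv hdv x v) = of_int (sum \<theta> S)"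
      using \<open>S \<subseteq> Q0\<close> unfolding P_def mem_flow_polytope_iff[OF assms(2)] by (auto simp: subset_iff)
    then show "x a = of_int (sum \<theta> S) + (\<Sum>b\<in>B. x b)"
      unfolding sum_net_flow_cut[OF assms(1,2) a entering] B_def by simp
  qed
  have "R \<subseteq> (\<lambda>x. x(a := 0)) ` P"
  proof
    fix y assume y: "y \<in> R"
    define t where "t = of_int (sum \<theta> S) + (\<Sum>b\<in>B. y b)"
    have y_arrows: "\<forall>i\<in>Q1 - {a}. 0 \<le> y i" "y a = 0"
      using y unfolding R_def mem_flow_polytope_iff[OF finite_Diff[OF assms(2)]] by auto
    then have "0 \<le> (\<Sum>b\<in>B. y b)"
      using B by (intro sum_nonneg) auto
    then have "0 \<le> t"
      using \<open>0 \<le> sum \<theta> S\<close> by (simp add: t_def del: of_int_sum)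
    moreover have "of_int (\<theta> (hdv a)) = net_flow Q1 tlv hdv (y(a := t)) (hdv a)"
      using lift_flow_equation_head[OF assms(1,2,4) a(1) ends(1) a(2,3) entering y[unfolded R_def]]
      unfolding t_def B_def .
    ultimately have "y(a := t) \<in> P"
      unfolding P_def by (rule flow_polytope_uncontract[where tlv=tlv and hdv=hdv, OF assms(2) a(1) ends(1,3) y[unfolded R_def]])
    moreover have "y = (y(a := t))(a := 0)"
      using y_arrows(2) by auto
    ultimately show "y \<in> (\<lambda>x. x(a := 0)) ` P"
      by (intro image_eqI[where f = "\<lambda>x. x(a := 0)"])
  qed
  moreover have "(\<lambda>x. x(a := 0)) ` P \<subseteq> R"
    unfolding P_def R_def by (intro image_subsetI flow_polytope_contract[where tlv=tlv and hdv=hdv, OF assms(2) a(1) ends])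
  ultimately have "R = (\<lambda>x. x(a := 0)) ` P"
    by (rule antisym)
  moreover have "int_aff_equiv P ((\<lambda>x. x(a := 0)) ` P)"
    using B(2,1) Ints_of_int cut_P by (rule int_aff_equiv_forget_coordinate)
  ultimately have "int_aff_equiv P R"
    by simp
  then show ?thesis
    unfolding contractable_def P_def R_def using a(1) ends(3) by blast
qed

theorem proposition4p6:
  fixes Q0 :: "'v set" and Q1 :: "'a set" and tlv hdv :: "'a \<Rightarrow> 'v"
    and \<theta> :: "'v \<Rightarrow> int" and S :: "'v set"
  assumes "finite Q0" and "finite Q1"
    and "\<forall>c\<in>Q1. tlv c \<in> Q0 \<and> hdv c \<in> Q0"
    and "flow_polytope Q0 Q1 tlv hdv \<theta> \<noteq> {}"
    and "S \<subseteq> Q0"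
    and "\<forall>a\<in>Q1. \<forall>a'\<in>Q1. hdv a \<in> S \<and> tlv a \<notin> S \<and> hdv a' \<in> S \<and> tlv a' \<notin> S \<longrightarrow> a = a'"
    and "\<forall>b\<in>Q1. \<forall>b'\<in>Q1. hdv b \<notin> S \<and> tlv b \<in> S \<and> hdv b' \<notin> S \<and> tlv b' \<in> S \<longrightarrow> b = b'"
  shows "(\<forall>a\<in>Q1. hdv a \<in> S \<and> tlv a \<notin> S \<and> sum \<theta> S \<ge> 0 \<longrightarrow> contractable Q0 Q1 tlv hdv \<theta> a) \<and>
         (\<forall>b\<in>Q1. hdv b \<notin> S \<and> tlv b \<in> S \<and> sum \<theta> S \<le> 0 \<longrightarrow> contractable Q0 Q1 tlv hdv \<theta> b)"
proof (intro conjI ballI impI)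
  fix a assume "a \<in> Q1" and a: "hdv a \<in> S \<and> tlv a \<notin> S \<and> sum \<theta> S \<ge> 0"
  have "finite S" using assms(1,5) by (rule finite_subset[rotated])
  moreover have "\<forall>c\<in>Q1. hdv c \<in> S \<and> tlv c \<notin> S \<longrightarrow> c = a"
    using assms(6) \<open>a \<in> Q1\<close> a by blast
  ultimately show "contractable Q0 Q1 tlv hdv \<theta> a"
    using a by (elim conjE contractable_entering_arrow[OF _ assms(2,3,5) \<open>a \<in> Q1\<close>])
next
  fix b assume "b \<in> Q1" and b: "hdv b \<notin> S \<and> tlv b \<in> S \<and> sum \<theta> S \<le> 0"
  \<comment> \<open>b is the only arrow entering the complement of S, whose weight is \<open>-\<theta>(S) \<ge> 0\<close>.\<close>
  have "sum \<theta> (Q0 - S) = - sum \<theta> S"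
    using sum_eq_0_if_flow_polytope_nonempty[OF assms(1-4)] assms(1,5) by (simp add: sum_diff)
  then have "0 \<le> sum \<theta> (Q0 - S)"
    using b by simp
  moreover have "\<forall>c\<in>Q1. hdv c \<in> Q0 - S \<and> tlv c \<notin> Q0 - S \<longrightarrow> c = b"
    using assms(3,7) \<open>b \<in> Q1\<close> b by blast
  moreover have "hdv b \<in> Q0 - S" "tlv b \<notin> Q0 - S"
    using assms(3) \<open>b \<in> Q1\<close> b by auto
  ultimately show "contractable Q0 Q1 tlv hdv \<theta> b"
    using contractable_entering_arrow[OF _ assms(2,3) _ \<open>b \<in> Q1\<close>] assms(1) by blast
qed

end
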